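(* Let $\vartheta\in\{p,bp,r\}$. Neither of the spaces $\mathcal{H}_{\vartheta}$ and $\mathcal{L}_u$ is contained in the other; that is, $\mathcal{H}_{\vartheta}\setminus\mathcal{L}_u\neq\emptyset$ and $\mathcal{L}_u\setminus\mathcal{H}_{\vartheta}\neq\emptyset$.
   Context: $\Omega$ denotes the set of all complex double sequences $x=(x_{kl})_{k,l\ge 1}$. A double sequence is $p$-convergent (Pringsheim convergent) to $L$ if for every $\varepsilon>0$ there is $N$ with $|x_{kl}-L|<\varepsilon$ for all $k,l\ge N$; $bp$-convergent if bounded and $p$-convergent; $r$-convergent (regularly convergent) if $p$-convergent and every row and every column converges. For $\vartheta\in\{p,bp,r\}$, $\mathcal{C}_{\vartheta 0}$ is the set of double sequences $\vartheta$-convergent to $0$. $\Delta x_{kl}=x_{kl}-x_{k+1,l}-x_{k,l+1}+x_{k+1,l+1}$, and $\mathcal{H}_{\vartheta}=\{x\in\Omega:\sum_{k,l=1}^{\infty}|kl\,\Delta x_{kl}|<\infty\}\cap\mathcal{C}_{\vartheta 0}$. $\mathcal{L}_u=\{x\in\Omega:\sum_{k,l=1}^{\infty}|x_{kl}|<\infty\}$ is the space of absolutely summable double sequences. *)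

theory Defs
  imports "HOL-Analysis.Analysis"
begin

text \<open>Double sequences x = (x_kl)_{k,l>=1} are modelled as functions nat => nat => complex;
  only the values at indices k,l >= 1 are relevant.\<close>

type_synonym dseq = "nat \<Rightarrow> nat \<Rightarrow> complex"

definition p_conv :: "dseq \<Rightarrow> complex \<Rightarrow> bool" where
  "p_conv x L \<longleftrightarrow> (\<forall>\<epsilon>>0. \<exists>N. \<forall>k\<ge>N. \<forall>l\<ge>N. cmod (x k l - L) < \<epsilon>)"

definition dbounded :: "dseq \<Rightarrow> bool" where
  "dbounded x \<longleftrightarrow> (\<exists>B. \<forall>k\<ge>1. \<forall>l\<ge>1. cmod (x k l) \<le> B)"

definition bp_conv :: "dseq \<Rightarrow> complex \<Rightarrow> bool" where
  "bp_conv x L \<longleftrightarrow> dbounded x \<and> p_conv x L"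

definition r_conv :: "dseq \<Rightarrow> complex \<Rightarrow> bool" where
  "r_conv x L \<longleftrightarrow> p_conv x L \<and> (\<forall>k\<ge>1. convergent (\<lambda>l. x k l))
                               \<and> (\<forall>l\<ge>1. convergent (\<lambda>k. x k l))"

datatype conv_mode = P | BP | R

fun conv_to :: "conv_mode \<Rightarrow> dseq \<Rightarrow> complex \<Rightarrow> bool" where
  "conv_to P x L = p_conv x L"
| "conv_to BP x L = bp_conv x L"
| "conv_to R x L = r_conv x L"

definition C0 :: "conv_mode \<Rightarrow> dseq set" where
  "C0 \<theta> = {x. conv_to \<theta> x 0}"

definition Delta :: "dseq \<Rightarrow> nat \<Rightarrow> nat \<Rightarrow> complex" where
  "Delta x k l = x k l - x (Suc k) l - x k (Suc l) + x (Suc k) (Suc l)"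

definition H_space :: "conv_mode \<Rightarrow> dseq set" where
  "H_space \<theta> = {x. (\<lambda>(k,l). cmod (of_nat (k*l) * Delta x k l)) summable_on ({1..} \<times> {1..})} \<inter> C0 \<theta>"

definition L_u :: "dseq set" where
  "L_u = {x. (\<lambda>(k,l). cmod (x k l)) summable_on ({1..} \<times> {1..})}"

end

theory Submission
  imports Defs
begin

text \<open>The indicator of the first row has \<open>\<Delta> = 0\<close> everywhere (it does not depend on \<open>l\<close>), so it
  lies in every \<open>H\<^sub>\<theta>\<close>, but it has infinitely many entries equal to 1. Conversely, the diagonal
  sequence \<open>1/k\<^sup>2\<close> is absolutely summable, while \<open>k\<^sup>2 \<Delta>\<close> at the diagonal point \<open>(k, k)\<close> equals
  \<open>1 + k\<^sup>2/(k+1)\<^sup>2 \<ge> 1\<close>.\<close>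

lemma not_summable_on_if_infinite_ge:
  fixes f :: "'a \<Rightarrow> real"
  assumes nonneg: "\<And>x. x \<in> A \<Longrightarrow> f x \<ge> 0"
    and "B \<subseteq> A" "infinite B" "c > 0" and ge: "\<And>x. x \<in> B \<Longrightarrow> f x \<ge> c"
  shows "\<not> f summable_on A"
proof
  assume summable: "f summable_on A"
  obtain n :: nat where n: "infsum f A < real n * c"
    using reals_Archimedean3[OF \<open>c > 0\<close>] by blast
  obtain F where F: "finite F" "card F = n" "F \<subseteq> B"
    using infinite_arbitrarily_large[OF \<open>infinite B\<close>] by blast
  have "real n * c = (\<Sum>x\<in>F. c)"
    using F by simp
  also have "\<dots> \<le> sum f F"
    using F ge by (intro sum_mono) auto
  also have "\<dots> \<le> infsum f A"
    using F \<open>B \<subseteq> A\<close> nonneg by (intro finite_sum_le_infsum[OF summable]) auto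
  finally show False
    using n by simp
qed

lemma summable_on_diagonal_iff:
  fixes f :: "'a \<times> 'a \<Rightarrow> 'b::{comm_monoid_add, topological_space}"
  assumes "\<And>k l. k \<noteq> l \<Longrightarrow> f (k, l) = 0"
  shows "f summable_on (A \<times> A) \<longleftrightarrow> (\<lambda>k. f (k, k)) summable_on A"
proof -
  have "f summable_on (A \<times> A) \<longleftrightarrow> f summable_on ((\<lambda>k. (k, k)) ` A)"
    using assms by (intro summable_on_cong_neutral) auto
  also have "\<dots> \<longleftrightarrow> (f \<circ> (\<lambda>k. (k, k))) summable_on A"
    by (rule summable_on_reindex) (auto simp: inj_on_def)
  finally show ?thesis
    by (simp add: o_def)
qed

lemma p_conv_zero_if_norm_le:
  assumes le: "\<And>k l. cmod (x k l) \<le> b k" and "b \<longlonglongrightarrow> 0"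
  shows "p_conv x 0"
  unfolding p_conv_def
proof (intro allI impI)
  fix e :: real
  assume "e > 0"
  then obtain N where N: "\<And>k. k \<ge> N \<Longrightarrow> \<bar>b k\<bar> < e"
    using \<open>b \<longlonglongrightarrow> 0\<close> by (auto simp: LIMSEQ_iff)
  have "cmod (x k l) < e" if "k \<ge> N" for k l
    using le[of k l] abs_ge_self[of "b k"] N[OF that] by linarith
  then show "\<exists>N. \<forall>k\<ge>N. \<forall>l\<ge>N. cmod (x k l - 0) < e"
    by auto
qed

text \<open>The domination alone already makes every column tend to 0, so only the rows need a
  separate hypothesis for regular convergence.\<close>

lemma in_C0_if_norm_le:
  assumes le: "\<And>k l. cmod (x k l) \<le> b k" and b: "b \<longlonglongrightarrow> 0"
    and rows: "\<And>k. convergent (\<lambda>l. x k l)"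
  shows "x \<in> C0 \<theta>"
proof -
  have "p_conv x 0"
    using le b by (rule p_conv_zero_if_norm_le)
  moreover have "dbounded x"
  proof -
    obtain B where B: "\<And>k. norm (b k) \<le> B"
      using convergent_imp_Bseq[OF convergentI[OF b]] unfolding Bseq_def by blast
    have "cmod (x k l) \<le> B" for k l
      using le[of k l] B[of k] by (metis abs_ge_self order_trans real_norm_def)
    then show ?thesis
      unfolding dbounded_def by blast
  qed
  moreover have "convergent (\<lambda>k. x k l)" for l
  proof -
    have "eventually (\<lambda>k. norm (x k l) \<le> b k) sequentially"
      by (simp add: le)
    then have "(\<lambda>k. x k l) \<longlonglongrightarrow> 0"
      using b by (rule Lim_null_comparison)
    then show ?thesis
      by (rule convergentI)
  qed
  ultimately show ?thesis
    using rows by (cases \<theta>) (auto simp: C0_def bp_conv_def r_conv_def)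
qed

definition first_row :: dseq where
  "first_row k l = (if k = 1 then 1 else 0)"

definition inverse_square_diagonal :: dseq where
  "inverse_square_diagonal k l = (if k = l then inverse (of_nat k ^ 2) else 0)"

lemma first_row_in_H_space: "first_row \<in> H_space \<theta>"
proof -
  have "Delta first_row k l = 0" for k l
    by (simp add: Delta_def first_row_def)
  then have "(\<lambda>(k, l). cmod (of_nat (k * l) * Delta first_row k l)) summable_on ({1..} \<times> {1..})"
    by (intro summable_on_0) auto
  moreover have "first_row \<in> C0 \<theta>"
  proof (rule in_C0_if_norm_le)
    show "cmod (first_row k l) \<le> (if k = 1 then 1 else 0)" for k l
      by (simp add: first_row_def)
    show "(\<lambda>k. if k = 1 then 1 else 0 :: real) \<longlonglongrightarrow> 0"
      by (rule tendsto_eventually) (auto intro: eventually_sequentiallyI[of 2])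
  qed (auto simp: first_row_def intro: convergent_const)
  ultimately show ?thesis
    by (simp add: H_space_def)
qed

lemma first_row_not_in_L_u: "first_row \<notin> L_u"
proof -
  have "\<not> (\<lambda>(k, l). cmod (first_row k l)) summable_on ({1..} \<times> {1..})"
    by (intro not_summable_on_if_infinite_ge[where B = "{1} \<times> {1..}" and c = 1])
       (auto simp: first_row_def finite_cartesian_product_iff infinite_Ici)
  then show ?thesis
    by (simp add: L_u_def)
qed

lemma inverse_square_diagonal_in_L_u: "inverse_square_diagonal \<in> L_u"
proof -
  have "(\<lambda>k::nat. inverse (real k ^ 2)) summable_on UNIV"
    by (subst summable_on_UNIV_nonneg_real_iff) (auto intro: inverse_power_summable)
  then have "(\<lambda>k::nat. inverse (real k ^ 2)) summable_on {1..}"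
    by (rule summable_on_subset) auto
  then have "(\<lambda>(k, l). cmod (inverse_square_diagonal k l)) summable_on ({1..} \<times> {1..})"
    by (subst summable_on_diagonal_iff)
       (auto simp: inverse_square_diagonal_def norm_inverse norm_power)
  then show ?thesis
    by (simp add: L_u_def)
qed

lemma Delta_inverse_square_diagonal:
  "Delta inverse_square_diagonal k k = of_real (inverse (real k ^ 2) + inverse (real (Suc k) ^ 2))"
  by (simp add: Delta_def inverse_square_diagonal_def)

lemma inverse_square_diagonal_not_in_H_space: "inverse_square_diagonal \<notin> H_space \<theta>"
proof -
  have "cmod (of_nat (k * k) * Delta inverse_square_diagonal k k) \<ge> 1" if "k \<ge> 1" for k
  proof -
    have "cmod (of_nat (k * k) * Delta inverse_square_diagonal k k)
        = cmod (of_real (real k ^ 2 * (inverse (real k ^ 2) + inverse (real (Suc k) ^ 2))))"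
      by (simp add: Delta_inverse_square_diagonal power2_eq_square del: of_nat_Suc)
    also have "\<dots> = real k ^ 2 * (inverse (real k ^ 2) + inverse (real (Suc k) ^ 2))"
      unfolding norm_of_real by (intro abs_of_nonneg) simp
    also have "\<dots> \<ge> real k ^ 2 * inverse (real k ^ 2)"
      by (intro mult_left_mono) auto
    also have "real k ^ 2 * inverse (real k ^ 2) = 1"
      using that by simp
    finally show ?thesis .
  qed
  moreover have "infinite ((\<lambda>k. (k, k)) ` {1::nat..})"
    by (auto simp: finite_image_iff inj_on_def infinite_Ici)
  ultimately have "\<not> (\<lambda>(k, l). cmod (of_nat (k * l) * Delta inverse_square_diagonal k l))
                      summable_on ({1..} \<times> {1..})"
    by (intro not_summable_on_if_infinite_ge[where B = "(\<lambda>k. (k, k)) ` {1..}" and c = 1]) auto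
  then show ?thesis
    by (simp add: H_space_def)
qed

theorem theorem2p4:
  fixes \<theta> :: conv_mode
  shows "H_space \<theta> - L_u \<noteq> {} \<and> L_u - H_space \<theta> \<noteq> {}"
  using first_row_in_H_space first_row_not_in_L_u
    inverse_square_diagonal_in_L_u inverse_square_diagonal_not_in_H_space
  by blast

end
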